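(* Let $G$ be a simple stochastic game, $A$ a subset of its arcs, and $\sigma,\sigma'$ positional MAX strategies. Then $v^{G}_{\sigma'|_A \sigma}(x) = v^{G[A,\sigma]}_{\sigma'}(x)$ for every vertex $x$ of $G$.
   Context: A simple stochastic game (SSG) $G$ is a finite directed graph whose vertex set is partitioned into MAX vertices, MIN vertices, random vertices and a nonempty set of sinks; every non-sink vertex has at least one outgoing arc, every sink has exactly one outgoing arc, a self-loop; each random vertex $x$ carries a rational probability distribution $p_x$ on its out-neighbourhood, positive on every out-neighbour; each sink $s$ has rational value $\mathrm{Val}(s)\in[0,1]$. A history is a finite directed path; a general MAX (resp. MIN) strategy maps each history ending in a MAX (resp. MIN) vertex $x$ to an out-neighbour of $x$; it is positional if it depends only on the last vertex. Under strategies $\sigma,\tau$ from start $x_0$, the random play is built step by step: at a MAX (MIN) vertex the next vertex is $\sigma$ (resp. $\tau$) applied to the history so far, at a random vertex $x$ it is drawn according to $p_x$ independently, and at a sink the play stays there. The play's value is $\mathrm{Val}(s)$ if it reaches sink $s$, else $0$; $v^G_{\sigma,\tau}(x_0)$ is its expectation. For a MAX strategy $\sigma$, $v^G_\sigma$ is the value $v^G_{\sigma,\tau}$ under a best response $\tau$, i.e. a MIN strategy with $v_{\sigma,\tau}\le v_{\sigma,\tau'}$ pointwise for all general MIN strategies $\tau'$ (for positional $\sigma$ a positional best response exists). Concatenation: for MAX strategies $\sigma,\sigma'$ and a set $A$ of arcs, $\sigma'|_A\sigma$ is the (generally non-positional) MAX strategy that plays like $\sigma'$ until an arc of $A$ is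 crossed, and from then on plays like $\sigma$. Transformed game: $G[A,\sigma]$ is obtained from a copy of $G$ by replacing each arc $e=(x,y)\in A$ by an arc $(x,s_e)$ to a new sink $s_e$ of value $v^G_\sigma(y)$ (for random $x$, $p_x(s_e)=p_x(y)$); $y$ is kept. Positional strategies of $G$ are identified with those of $G[A,\sigma]$ (a MAX vertex $x$ with $\sigma'(x)=y$, $(x,y)\in A$, moves to $s_{(x,y)}$). *)

theory Defs
  imports Complex_Main
begin

record 'v ssg =
  verts :: "'v set"
  arcs  :: "('v \<times> 'v) set"
  vmax  :: "'v set"
  vmin  :: "'v set"
  vrand :: "'v set"
  sinks :: "'v set"
  prob  :: "'v \<Rightarrow> 'v \<Rightarrow> real"
  val   :: "'v \<Rightarrow> real"

definition succs :: "('v, 'a) ssg_scheme \<Rightarrow> 'v \<Rightarrow> 'v set" where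
  "succs G x = {y. (x, y) \<in> arcs G}"

definition is_ssg :: "('v, 'a) ssg_scheme \<Rightarrow> bool" where
  "is_ssg G \<longleftrightarrow>
     finite (verts G) \<and>
     arcs G \<subseteq> verts G \<times> verts G \<and>
     vmax G \<union> vmin G \<union> vrand G \<union> sinks G = verts G \<and>
     vmax G \<inter> vmin G = {} \<and> vmax G \<inter> vrand G = {} \<and> vmax G \<inter> sinks G = {} \<and>
     vmin G \<inter> vrand G = {} \<and> vmin G \<inter> sinks G = {} \<and> vrand G \<inter> sinks G = {} \<and>
     sinks G \<noteq> {} \<and>
     (\<forall>x \<in> verts G - sinks G. succs G x \<noteq> {}) \<and>
     (\<forall>s \<in> sinks G. succs G s = {s}) \<and>
     (\<forall>x \<in> vrand G. (\<forall>y. prob G x y \<in> \<rat>) \<and>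
        (\<forall>y \<in> succs G x. prob G x y > 0) \<and>
        (\<forall>y. y \<notin> succs G x \<longrightarrow> prob G x y = 0) \<and>
        sum (prob G x) (succs G x) = 1) \<and>
     (\<forall>s \<in> sinks G. val G s \<in> \<rat> \<and> 0 \<le> val G s \<and> val G s \<le> 1)"

definition is_history :: "('v, 'a) ssg_scheme \<Rightarrow> 'v list \<Rightarrow> bool" where
  "is_history G h \<longleftrightarrow> h \<noteq> [] \<and> set h \<subseteq> verts G \<and>
     (\<forall>i. Suc i < length h \<longrightarrow> (h ! i, h ! Suc i) \<in> arcs G)"

definition max_strategy :: "('v, 'a) ssg_scheme \<Rightarrow> ('v list \<Rightarrow> 'v) \<Rightarrow> bool" where
  "max_strategy G \<sigma> \<longleftrightarrow>
     (\<forall>h. is_history G h \<and> last h \<in> vmax G \<longrightarrow> (last h, \<sigma> h) \<in> arcs G)"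

definition min_strategy :: "('v, 'a) ssg_scheme \<Rightarrow> ('v list \<Rightarrow> 'v) \<Rightarrow> bool" where
  "min_strategy G \<tau> \<longleftrightarrow>
     (\<forall>h. is_history G h \<and> last h \<in> vmin G \<longrightarrow> (last h, \<tau> h) \<in> arcs G)"

definition positional_max :: "('v, 'a) ssg_scheme \<Rightarrow> ('v \<Rightarrow> 'v) \<Rightarrow> bool" where
  "positional_max G s \<longleftrightarrow> (\<forall>x \<in> vmax G. (x, s x) \<in> arcs G)"

definition pos :: "('v \<Rightarrow> 'v) \<Rightarrow> ('v list \<Rightarrow> 'v)" where
  "pos s = (\<lambda>h. s (last h))"

definition trans :: "('v, 'a) ssg_scheme \<Rightarrow> ('v list \<Rightarrow> 'v) \<Rightarrow> ('v list \<Rightarrow> 'v)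
                      \<Rightarrow> 'v list \<Rightarrow> 'v \<Rightarrow> real" where
  "trans G \<sigma> \<tau> h y =
     (let x = last h in
      if x \<in> vmax G then (if \<sigma> h = y then 1 else 0)
      else if x \<in> vmin G then (if \<tau> h = y then 1 else 0)
      else if x \<in> vrand G then prob G x y
      else if x \<in> sinks G then (if y = x then 1 else 0)
      else 0)"

definition hprob :: "('v, 'a) ssg_scheme \<Rightarrow> ('v list \<Rightarrow> 'v) \<Rightarrow> ('v list \<Rightarrow> 'v)
                      \<Rightarrow> 'v list \<Rightarrow> real" where
  "hprob G \<sigma> \<tau> h =
     (\<Prod>i < length h - 1. trans G \<sigma> \<tau> (take (Suc i) h) (h ! Suc i))"

definition sink_payoff :: "('v, 'a) ssg_scheme \<Rightarrow> 'v \<Rightarrow> real" where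
  "sink_payoff G x = (if x \<in> sinks G then val G x else 0)"

text \<open>Expected payoff of the play after n steps: the play has value Val(s) if it has
  reached sink s (sinks are absorbing), and 0 otherwise.\<close>

definition step_value :: "('v, 'a) ssg_scheme \<Rightarrow> ('v list \<Rightarrow> 'v) \<Rightarrow> ('v list \<Rightarrow> 'v)
                           \<Rightarrow> 'v \<Rightarrow> nat \<Rightarrow> real" where
  "step_value G \<sigma> \<tau> x0 n =
     (\<Sum>h \<in> {h. length h = Suc n \<and> hd h = x0 \<and> set h \<subseteq> verts G}.
        hprob G \<sigma> \<tau> h * sink_payoff G (last h))"

text \<open>v_{\<sigma>,\<tau>}(x0): expected value of the play, i.e. the limit of the (nondecreasing)
  n-step payoffs, since sinks are absorbing and the play's value is Val of the sink
  it reaches (0 if none).\<close>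

definition play_value :: "('v, 'a) ssg_scheme \<Rightarrow> ('v list \<Rightarrow> 'v) \<Rightarrow> ('v list \<Rightarrow> 'v)
                           \<Rightarrow> 'v \<Rightarrow> real" where
  "play_value G \<sigma> \<tau> x0 = (SUP n. step_value G \<sigma> \<tau> x0 n)"

definition best_response :: "('v, 'a) ssg_scheme \<Rightarrow> ('v list \<Rightarrow> 'v) \<Rightarrow> ('v list \<Rightarrow> 'v) \<Rightarrow> bool" where
  "best_response G \<sigma> \<tau> \<longleftrightarrow> min_strategy G \<tau> \<and>
     (\<forall>\<tau>'. min_strategy G \<tau>' \<longrightarrow> (\<forall>x \<in> verts G. play_value G \<sigma> \<tau> x \<le> play_value G \<sigma> \<tau>' x))"

text \<open>v_\<sigma>(x): value under a best response of MIN; stated as the pointwise infimum over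
  all general MIN strategies, which coincides with v_{\<sigma>,\<tau>}(x) for any best response \<tau>.\<close>

definition strat_value :: "('v, 'a) ssg_scheme \<Rightarrow> ('v list \<Rightarrow> 'v) \<Rightarrow> 'v \<Rightarrow> real" where
  "strat_value G \<sigma> x = (INF \<tau> \<in> {\<tau>. min_strategy G \<tau>}. play_value G \<sigma> \<tau> x)"

text \<open>\<sigma>'|_A \<sigma>: play like \<sigma>' until an arc of A is crossed, afterwards play like \<sigma>
  on the history starting at the head of the first crossed A-arc.\<close>

definition concat_strategy :: "('v list \<Rightarrow> 'v) \<Rightarrow> ('v \<times> 'v) set \<Rightarrow> ('v list \<Rightarrow> 'v)
                                \<Rightarrow> ('v list \<Rightarrow> 'v)" where
  "concat_strategy \<sigma>' A \<sigma> h =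
     (if \<exists>i. Suc i < length h \<and> (h ! i, h ! Suc i) \<in> A
      then \<sigma> (drop (Suc (LEAST i. Suc i < length h \<and> (h ! i, h ! Suc i) \<in> A)) h)
      else \<sigma>' h)"

text \<open>Vertices: Inl x for the copy of vertex x of G, Inr e for the new sink s_e, e \<in> A.\<close>

definition transformed :: "('v, 'a) ssg_scheme \<Rightarrow> ('v \<times> 'v) set \<Rightarrow> ('v list \<Rightarrow> 'v)
                            \<Rightarrow> ('v + ('v \<times> 'v)) ssg" where
  "transformed G A \<sigma> =
     \<lparr> verts = Inl ` verts G \<union> Inr ` A,
       arcs = {(Inl x, Inl y) | x y. (x, y) \<in> arcs G - A}
              \<union> {(Inl x, Inr (x, y)) | x y. (x, y) \<in> A}
              \<union> {(Inr e, Inr e) | e. e \<in> A},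
       vmax = Inl ` vmax G,
       vmin = Inl ` vmin G,
       vrand = Inl ` vrand G,
       sinks = Inl ` sinks G \<union> Inr ` A,
       prob = (\<lambda>u w. case (u, w) of
                 (Inl x, Inl y) \<Rightarrow> (if (x, y) \<in> A then 0 else prob G x y)
               | (Inl x, Inr (x', y)) \<Rightarrow> (if x' = x \<and> (x, y) \<in> A then prob G x y else 0)
               | _ \<Rightarrow> 0),
       val = (\<lambda>u. case u of
                 Inl s \<Rightarrow> val G s
               | Inr (x, y) \<Rightarrow> strat_value G \<sigma> y) \<rparr>"

definition lift_positional :: "('v \<times> 'v) set \<Rightarrow> ('v \<Rightarrow> 'v) \<Rightarrow> ('v + ('v \<times> 'v) \<Rightarrow> 'v + ('v \<times> 'v))" where
  "lift_positional A s u = (case u of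
       Inl x \<Rightarrow> (if (x, s x) \<in> A then Inr (x, s x) else Inl (s x))
     | Inr e \<Rightarrow> Inr e)"

end

theory Submission
  imports Defs
begin

(* Until an arc of A is crossed, a play of G under the concatenated strategy and a play of
   G[A,\<sigma>] under \<sigma>' move in lockstep (x corresponding to Inl x), and MIN strategies can be
   translated between the two games along such plays. Crossing (x, y) \<in> A ends the play of
   G[A,\<sigma>] in a sink worth v_\<sigma>(y), while in G the play continues from y under \<sigma>: there MIN
   cannot push the value below v_\<sigma>(y), and gets within \<epsilon> of it by switching to an
   \<epsilon>-best response to \<sigma>. Induction on the horizon along uncrossed histories turns these two
   facts into the two inequalities between the values. *)

fun exp_payoff :: "('v, 'a) ssg_scheme \<Rightarrow> ('v list \<Rightarrow> 'v) \<Rightarrow> ('v list \<Rightarrow> 'v)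
                     \<Rightarrow> 'v list \<Rightarrow> nat \<Rightarrow> real" where
  "exp_payoff G s t h 0 = sink_payoff G (last h)"
| "exp_payoff G s t h (Suc n) = (\<Sum>y\<in>verts G. trans G s t h y * exp_payoff G s t (h @ [y]) n)"

definition hist_value :: "('v, 'a) ssg_scheme \<Rightarrow> ('v list \<Rightarrow> 'v) \<Rightarrow> ('v list \<Rightarrow> 'v)
                          \<Rightarrow> 'v list \<Rightarrow> real" where
  "hist_value G s t h = (SUP n. exp_payoff G s t h n)"

text \<open>Unlike \<open>is_ssg\<close>, these conditions are inherited by the transformed game, whose new
  sink values need not be rational.\<close>

definition subprob_game :: "('v, 'a) ssg_scheme \<Rightarrow> bool" where
  "subprob_game G \<longleftrightarrow> finite (verts G) \<and> sinks G \<inter> (vmax G \<union> vmin G \<union> vrand G) = {} \<and>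
    (\<forall>x\<in>vrand G. (\<forall>y. 0 \<le> prob G x y) \<and> sum (prob G x) (verts G) \<le> 1) \<and>
    (\<forall>s\<in>sinks G. 0 \<le> val G s \<and> val G s \<le> 1)"

lemma trans_nonneg: "subprob_game G \<Longrightarrow> 0 \<le> trans G s t h y"
  unfolding subprob_game_def trans_def Let_def by auto

lemma sum_trans_le_1:
  assumes "subprob_game G"
  shows "(\<Sum>y\<in>verts G. trans G s t h y) \<le> 1"
proof -
  have fin: "finite (verts G)" using assms subprob_game_def by auto
  consider "last h \<in> vmax G" | "last h \<notin> vmax G" "last h \<in> vmin G"
    | "last h \<notin> vmax G" "last h \<notin> vmin G" "last h \<in> vrand G"
    | "last h \<notin> vmax G" "last h \<notin> vmin G" "last h \<notin> vrand G" "last h \<in> sinks G"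
    | "last h \<notin> vmax G" "last h \<notin> vmin G" "last h \<notin> vrand G" "last h \<notin> sinks G"
    by blast
  then show ?thesis
  proof cases
    case 3 then show ?thesis using assms unfolding subprob_game_def trans_def Let_def by auto
  qed (use fin in \<open>auto simp: trans_def Let_def sum.delta sum.delta'\<close>)
qed

lemma sink_payoff_bounds: "subprob_game G \<Longrightarrow> 0 \<le> sink_payoff G x \<and> sink_payoff G x \<le> 1"
  unfolding subprob_game_def sink_payoff_def by auto

lemma subprob_game_if_ssg: "is_ssg G \<Longrightarrow> subprob_game G"
proof -
  assume G: "is_ssg G"
  have "0 \<le> prob G x y" if "x \<in> vrand G" for x y
    using G that unfolding is_ssg_def by (cases "y \<in> succs G x") (auto intro: less_imp_le)
  moreover have "sum (prob G x) (verts G) = sum (prob G x) (succs G x)" if "x \<in> vrand G" for x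
    using G that by (intro sum.mono_neutral_right) (auto simp: is_ssg_def succs_def)
  ultimately show ?thesis using G unfolding is_ssg_def subprob_game_def by auto
qed

lemma exp_payoff_bounds:
  assumes "subprob_game G"
  shows "0 \<le> exp_payoff G s t h n \<and> exp_payoff G s t h n \<le> 1"
proof (induction n arbitrary: h)
  case 0 then show ?case using sink_payoff_bounds[OF assms] by simp
next
  case (Suc n)
  have "0 \<le> exp_payoff G s t h (Suc n)"
    using Suc trans_nonneg[OF assms] by (auto intro!: sum_nonneg)
  moreover have "exp_payoff G s t h (Suc n) \<le> (\<Sum>y\<in>verts G. trans G s t h y)"
    using Suc trans_nonneg[OF assms] by (auto intro!: sum_mono mult_left_le)
  ultimately show ?case using sum_trans_le_1[OF assms, of s t h] by simp
qed

lemma exp_payoff_sink: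
  assumes "subprob_game G" "last h \<in> sinks G" "last h \<in> verts G"
  shows "exp_payoff G s t h n = sink_payoff G (last h)"
  using assms(2,3)
proof (induction n arbitrary: h)
  case 0 then show ?case by simp
next
  case (Suc n)
  have "last h \<notin> vmax G" "last h \<notin> vmin G" "last h \<notin> vrand G"
    using assms(1) Suc.prems unfolding subprob_game_def by auto
  then have "exp_payoff G s t h (Suc n)
      = (\<Sum>y\<in>verts G. if y = last h then exp_payoff G s t (h @ [y]) n else 0)"
    using Suc.prems by (auto simp: trans_def Let_def intro!: sum.cong)
  also have "\<dots> = exp_payoff G s t (h @ [last h]) n"
    using Suc.prems assms(1) by (simp add: sum.delta subprob_game_def)
  also have "\<dots> = sink_payoff G (last h)" using Suc.IH[of "h @ [last h]"] Suc.prems by simp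
  finally show ?case .
qed

lemma exp_payoff_Suc_ge:
  assumes "subprob_game G" "last h \<in> verts G"
  shows "exp_payoff G s t h n \<le> exp_payoff G s t h (Suc n)"
  using assms(2)
proof (induction n arbitrary: h)
  case 0
  show ?case
  proof (cases "last h \<in> sinks G")
    case True
    then show ?thesis
      using exp_payoff_sink[OF assms(1) True 0, of s t 0] exp_payoff_sink[OF assms(1) True 0, of s t 1]
      by simp
  next
    case False
    then show ?thesis
      using exp_payoff_bounds[OF assms(1), of s t h "Suc 0"] by (simp add: sink_payoff_def)
  qed
next
  case (Suc n)
  have "exp_payoff G s t h (Suc n) = (\<Sum>y\<in>verts G. trans G s t h y * exp_payoff G s t (h @ [y]) n)"
    by simp
  also have "\<dots> \<le> (\<Sum>y\<in>verts G. trans G s t h y * exp_payoff G s t (h @ [y]) (Suc n))"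
  proof (rule sum_mono)
    fix y assume "y \<in> verts G"
    then show "trans G s t h y * exp_payoff G s t (h @ [y]) n
             \<le> trans G s t h y * exp_payoff G s t (h @ [y]) (Suc n)"
      using Suc.IH[of "h @ [y]"] trans_nonneg[OF assms(1)] by (intro mult_left_mono) auto
  qed
  finally show ?case by simp
qed

lemma bdd_above_exp_payoff: "subprob_game G \<Longrightarrow> bdd_above (range (exp_payoff G s t h))"
  using exp_payoff_bounds by (metis bdd_aboveI2)

lemma exp_payoff_le_hist_value: "subprob_game G \<Longrightarrow> exp_payoff G s t h n \<le> hist_value G s t h"
  unfolding hist_value_def by (rule cSUP_upper[OF _ bdd_above_exp_payoff]) auto

lemma hist_value_le: "(\<And>n. exp_payoff G s t h n \<le> c) \<Longrightarrow> hist_value G s t h \<le> c"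
  unfolding hist_value_def by (rule cSUP_least) auto

lemma hist_value_bounds: "subprob_game G \<Longrightarrow> 0 \<le> hist_value G s t h \<and> hist_value G s t h \<le> 1"
  unfolding hist_value_def using exp_payoff_bounds
  by (metis (mono_tags, lifting) bdd_above_exp_payoff cSUP_least cSUP_upper2 UNIV_I UNIV_not_empty)

lemma exp_payoff_tendsto_hist_value:
  assumes "subprob_game G" "last h \<in> verts G"
  shows "(\<lambda>n. exp_payoff G s t h n) \<longlonglongrightarrow> hist_value G s t h"
  unfolding hist_value_def
  by (rule LIMSEQ_incseq_SUP[OF bdd_above_exp_payoff[OF assms(1)]])
     (rule incseq_SucI, rule exp_payoff_Suc_ge[OF assms])

lemma hist_value_step:
  assumes "subprob_game G" "last h \<in> verts G"
  shows "hist_value G s t h = (\<Sum>y\<in>verts G. trans G s t h y * hist_value G s t (h @ [y]))"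
proof -
  have "(\<lambda>n. exp_payoff G s t h (Suc n)) \<longlonglongrightarrow> hist_value G s t h"
    using exp_payoff_tendsto_hist_value[OF assms] by (rule LIMSEQ_Suc)
  moreover have "(\<lambda>n. exp_payoff G s t h (Suc n))
      \<longlonglongrightarrow> (\<Sum>y\<in>verts G. trans G s t h y * hist_value G s t (h @ [y]))"
    unfolding exp_payoff.simps
    by (intro tendsto_sum tendsto_mult tendsto_const exp_payoff_tendsto_hist_value[OF assms(1)]) simp
  ultimately show ?thesis by (rule LIMSEQ_unique)
qed

lemma exp_payoff_shift:
  assumes "h1 \<noteq> []" "h2 \<noteq> []" "last h1 = last h2"
    and "\<And>r. s1 (h1 @ r) = s2 (h2 @ r)" "\<And>r. t1 (h1 @ r) = t2 (h2 @ r)"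
  shows "exp_payoff G s1 t1 (h1 @ r) n = exp_payoff G s2 t2 (h2 @ r) n"
proof (induction n arbitrary: r)
  case 0 then show ?case using assms(1-3) by (simp add: last_append)
next
  case (Suc n)
  have "last (h1 @ r) = last (h2 @ r)" using assms(1-3) by (simp add: last_append)
  then have "trans G s1 t1 (h1 @ r) y = trans G s2 t2 (h2 @ r) y" for y
    unfolding trans_def Let_def assms(4,5) by simp
  then show ?case using Suc.IH[of "r @ [_]"] by simp
qed

lemma hist_value_shift:
  assumes "h1 \<noteq> []" "h2 \<noteq> []" "last h1 = last h2"
    and "\<And>r. s1 (h1 @ r) = s2 (h2 @ r)" "\<And>r. t1 (h1 @ r) = t2 (h2 @ r)"
  shows "hist_value G s1 t1 h1 = hist_value G s2 t2 h2"
proof -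
  have "exp_payoff G s1 t1 h1 n = exp_payoff G s2 t2 h2 n" for n
    using exp_payoff_shift[of h1 h2 s1 s2 t1 t2 G "[]" n] assms by simp
  then show ?thesis by (simp add: hist_value_def)
qed

definition cont_prob :: "('v, 'a) ssg_scheme \<Rightarrow> ('v list \<Rightarrow> 'v) \<Rightarrow> ('v list \<Rightarrow> 'v)
                         \<Rightarrow> 'v list \<Rightarrow> 'v list \<Rightarrow> real" where
  "cont_prob G s t h r = (\<Prod>i<length r. trans G s t (h @ take i r) (r ! i))"

lemma cont_prob_Cons: "cont_prob G s t h (y # r) = trans G s t h y * cont_prob G s t (h @ [y]) r"
  unfolding cont_prob_def length_Cons prod.lessThan_Suc_shift by simp

lemma lists_length_Suc_eq_image:
  "{xs. set xs \<subseteq> V \<and> length xs = Suc n} =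
   (\<lambda>(y, r). y # r) ` (V \<times> {xs. set xs \<subseteq> V \<and> length xs = n})"
  by (auto simp: length_Suc_conv image_iff)

lemma exp_payoff_eq_sum:
  assumes "finite (verts G)"
  shows "exp_payoff G s t h n = (\<Sum>r\<in>{xs. set xs \<subseteq> verts G \<and> length xs = n}.
            cont_prob G s t h r * sink_payoff G (last (h @ r)))"
proof (induction n arbitrary: h)
  case 0
  have "{xs. set xs \<subseteq> verts G \<and> length xs = 0} = {[]}" by auto
  then show ?case by (simp add: cont_prob_def)
next
  case (Suc n)
  let ?L = "{xs. set xs \<subseteq> verts G \<and> length xs = n}"
  have inj: "inj_on (\<lambda>(y, r). y # r) (verts G \<times> ?L)" by (auto simp: inj_on_def)
  have "(\<Sum>r\<in>{xs. set xs \<subseteq> verts G \<and> length xs = Suc n}.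
          cont_prob G s t h r * sink_payoff G (last (h @ r)))
      = (\<Sum>(y, r)\<in>verts G \<times> ?L. cont_prob G s t h (y # r) * sink_payoff G (last (h @ y # r)))"
    unfolding lists_length_Suc_eq_image by (subst sum.reindex[OF inj]) (simp add: case_prod_beta)
  also have "\<dots> = (\<Sum>y\<in>verts G. \<Sum>r\<in>?L.
                    cont_prob G s t h (y # r) * sink_payoff G (last (h @ y # r)))"
    by (rule sum.cartesian_product[symmetric])
  also have "\<dots> = (\<Sum>y\<in>verts G. trans G s t h y * exp_payoff G s t (h @ [y]) n)"
    unfolding Suc.IH cont_prob_Cons by (simp add: sum_distrib_left mult.assoc)
  finally show ?case by simp
qed

lemma step_value_eq_exp_payoff:
  assumes "finite (verts G)" "x \<in> verts G"
  shows "step_value G s t x n = exp_payoff G s t [x] n"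
proof -
  have plays: "{h. length h = Suc n \<and> hd h = x \<and> set h \<subseteq> verts G}
      = (\<lambda>r. x # r) ` {xs. set xs \<subseteq> verts G \<and> length xs = n}"
    using assms(2) by (auto simp: length_Suc_conv)
  have "hprob G s t (x # r) = cont_prob G s t [x] r" for r
    unfolding hprob_def cont_prob_def by simp
  then show ?thesis
    unfolding step_value_def exp_payoff_eq_sum[OF assms(1)] plays by (subst sum.reindex) auto
qed

lemma play_value_eq_hist_value:
  "finite (verts G) \<Longrightarrow> x \<in> verts G \<Longrightarrow> play_value G s t x = hist_value G s t [x]"
  unfolding play_value_def hist_value_def by (simp add: step_value_eq_exp_payoff)

lemma play_value_bounds:
  "subprob_game G \<Longrightarrow> x \<in> verts G \<Longrightarrow> 0 \<le> play_value G s t x \<and> play_value G s t x \<le> 1"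
  using play_value_eq_hist_value hist_value_bounds subprob_game_def by metis

lemma adjacent_pairs_snoc_iff:
  assumes "h \<noteq> []"
  shows "(\<forall>i. Suc i < length (h @ [y]) \<longrightarrow> R ((h @ [y]) ! i) ((h @ [y]) ! Suc i)) \<longleftrightarrow>
         (\<forall>i. Suc i < length h \<longrightarrow> R (h ! i) (h ! Suc i)) \<and> R (last h) y"
    (is "?L \<longleftrightarrow> ?R")
proof
  assume L: ?L
  have "R (h ! i) (h ! Suc i)" if "Suc i < length h" for i
    using L[rule_format, of i] that by (simp add: nth_append)
  moreover have "R (last h) y"
    using L[rule_format, of "length h - 1"] assms by (simp add: nth_append last_conv_nth)
  ultimately show ?R by blast
next
  assume R: ?R
  show ?L
  proof (intro allI impI)
    fix i assume "Suc i < length (h @ [y])"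
    then consider "Suc i < length h" | "i = length h - 1" by force
    then show "R ((h @ [y]) ! i) ((h @ [y]) ! Suc i)"
      by cases (use R assms in \<open>auto simp: nth_append last_conv_nth\<close>)
  qed
qed

lemma is_history_snoc_iff:
  "h \<noteq> [] \<Longrightarrow> is_history G (h @ [y]) \<longleftrightarrow> is_history G h \<and> (last h, y) \<in> arcs G \<and> y \<in> verts G"
  unfolding is_history_def
  using adjacent_pairs_snoc_iff[of h y "\<lambda>a b. (a, b) \<in> arcs G"] by auto

lemma is_history_drop: "is_history G h \<Longrightarrow> k < length h \<Longrightarrow> is_history G (drop k h)"
  unfolding is_history_def by (auto dest: in_set_dropD simp: add.commute)

lemma is_history_append:
  assumes "is_history G h" "is_history G r" "(last h, hd r) \<in> arcs G"
  shows "is_history G (h @ r)"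
  using assms(2,3)
proof (induction r rule: rev_induct)
  case (snoc y r)
  have h: "h \<noteq> []" using assms(1) unfolding is_history_def by simp
  show ?case
  proof (cases "r = []")
    case True
    moreover have "y \<in> verts G" using snoc.prems(1) True unfolding is_history_def by simp
    ultimately show ?thesis using snoc.prems h assms(1) by (simp add: is_history_snoc_iff)
  next
    case False
    then show ?thesis
      using snoc h is_history_snoc_iff[of "h @ r" G y] is_history_snoc_iff[of r G y] by simp
  qed
qed (simp add: is_history_def)

lemma is_history_last_in_verts: "is_history G h \<Longrightarrow> last h \<in> verts G"
  unfolding is_history_def by auto

lemma trans_nonzero_imp_arc:
  assumes "is_ssg G" "max_strategy G s" "min_strategy G t" "is_history G h"
    and "trans G s t h y \<noteq> 0"
  shows "(last h, y) \<in> arcs G"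
proof -
  have "vmax G \<union> vmin G \<union> vrand G \<union> sinks G = verts G"
    using assms(1) unfolding is_ssg_def by simp
  then have "last h \<in> vmax G \<union> vmin G \<union> vrand G \<union> sinks G"
    using assms(4) is_history_last_in_verts by blast
  then consider "last h \<in> vmax G" | "last h \<notin> vmax G" "last h \<in> vmin G"
    | "last h \<notin> vmax G" "last h \<notin> vmin G" "last h \<in> vrand G"
    | "last h \<notin> vmax G" "last h \<notin> vmin G" "last h \<notin> vrand G" "last h \<in> sinks G"
    by blast
  then show ?thesis
  proof cases
    case 1
    then have "s h = y" using assms(5) unfolding trans_def Let_def by (auto split: if_splits)
    then show ?thesis using 1 assms(2,4) unfolding max_strategy_def by blast
  next
    case 2
    then have "t h = y" using assms(5) unfolding trans_def Let_def by (auto split: if_splits)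
    then show ?thesis using 2 assms(3,4) unfolding min_strategy_def by blast
  next
    case 3
    then have "y \<in> succs G (last h)"
      using assms(1,5) unfolding is_ssg_def trans_def Let_def by auto
    then show ?thesis by (simp add: succs_def)
  next
    case 4
    then have "y = last h" using assms(5) unfolding trans_def Let_def by (auto split: if_splits)
    then show ?thesis using 4 assms(1) unfolding is_ssg_def succs_def by auto
  qed
qed

definition default_min :: "('v, 'a) ssg_scheme \<Rightarrow> 'v list \<Rightarrow> 'v" where
  "default_min G h = (SOME y. (last h, y) \<in> arcs G)"

lemma min_strategy_default_min: "is_ssg G \<Longrightarrow> min_strategy G (default_min G)"
  unfolding min_strategy_def
proof (intro allI impI)
  fix h assume "is_ssg G" and h: "is_history G h \<and> last h \<in> vmin G"
  then have "succs G (last h) \<noteq> {}" unfolding is_ssg_def is_history_def by auto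
  then have "\<exists>y. (last h, y) \<in> arcs G" unfolding succs_def by auto
  then show "(last h, default_min G h) \<in> arcs G" unfolding default_min_def by (rule someI_ex)
qed

definition continue_min :: "('v, 'a) ssg_scheme \<Rightarrow> ('v list \<Rightarrow> 'v) \<Rightarrow> 'v list \<Rightarrow> 'v
                            \<Rightarrow> 'v list \<Rightarrow> 'v" where
  "continue_min G t h y r = (if r \<noteq> [] \<and> hd r = y then t (h @ r) else default_min G r)"

lemma min_strategy_continue_min:
  assumes "is_ssg G" "min_strategy G t" "is_history G h" "(last h, y) \<in> arcs G"
  shows "min_strategy G (continue_min G t h y)"
  unfolding min_strategy_def
proof (intro allI impI)
  fix r assume r: "is_history G r \<and> last r \<in> vmin G"
  show "(last r, continue_min G t h y r) \<in> arcs G"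
  proof (cases "r \<noteq> [] \<and> hd r = y")
    case True
    then have "is_history G (h @ r)" using assms(3,4) r is_history_append by metis
    moreover have "last (h @ r) = last r" using True by simp
    ultimately show ?thesis using assms(2) r True unfolding min_strategy_def continue_min_def by metis
  next
    case False
    then show ?thesis
      using min_strategy_default_min[OF assms(1)] r unfolding min_strategy_def continue_min_def by auto
  qed
qed

definition crosses :: "('v \<times> 'v) set \<Rightarrow> 'v list \<Rightarrow> bool" where
  "crosses A h \<longleftrightarrow> (\<exists>i. Suc i < length h \<and> (h ! i, h ! Suc i) \<in> A)"

lemma crosses_singleton: "\<not> crosses A [x]"
  unfolding crosses_def by auto

lemma crosses_snoc_iff: "h \<noteq> [] \<Longrightarrow> crosses A (h @ [y]) \<longleftrightarrow> crosses A h \<or> (last h, y) \<in> A"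
  unfolding crosses_def
  using adjacent_pairs_snoc_iff[of h y "\<lambda>a b. (a, b) \<notin> A"] by auto

lemma concat_strategy_not_crosses:
  "\<not> crosses A h \<Longrightarrow> concat_strategy s' A s h = s' h"
  unfolding concat_strategy_def crosses_def by auto

lemma concat_strategy_crosses:
  assumes "crosses A h"
  obtains k where "0 < k" "k < length h" "concat_strategy s' A s h = s (drop k h)"
proof -
  let ?P = "\<lambda>i. Suc i < length h \<and> (h ! i, h ! Suc i) \<in> A"
  have "?P (LEAST i. ?P i)" using assms unfolding crosses_def by (rule LeastI_ex)
  then show ?thesis using assms that unfolding concat_strategy_def crosses_def by auto
qed

lemma concat_strategy_first_crossing:
  assumes "\<not> crosses A h" "h \<noteq> []" "(last h, y) \<in> A"
  shows "concat_strategy s' A s (h @ y # r) = s (y # r)"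
proof -
  let ?h = "h @ y # r"
  let ?P = "\<lambda>i. Suc i < length ?h \<and> (?h ! i, ?h ! Suc i) \<in> A"
  have P: "?P (length h - 1)" using assms(2,3) by (simp add: nth_append last_conv_nth)
  have "(LEAST i. ?P i) = length h - 1"
  proof (rule Least_equality)
    fix m assume m: "?P m"
    show "length h - 1 \<le> m"
    proof (rule ccontr)
      assume "\<not> length h - 1 \<le> m"
      then have "Suc m < length h" by simp
      then show False using m assms(1) unfolding crosses_def by (auto simp: nth_append)
    qed
  qed (rule P)
  moreover have "Suc (length h - 1) = length h" using assms(2) by simp
  moreover have "\<exists>i. ?P i" using P by blast
  ultimately show ?thesis unfolding concat_strategy_def by simp
qed

lemma concat_strategy_pos:
  "concat_strategy (pos s') A (pos s) h = (if crosses A h then s else s') (last h)"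
proof (cases "crosses A h")
  case True
  then obtain k where "k < length h" "concat_strategy (pos s') A (pos s) h = pos s (drop k h)"
    by (rule concat_strategy_crosses)
  then show ?thesis using True by (simp add: pos_def last_drop)
qed (simp add: concat_strategy_not_crosses pos_def)

lemma strat_value_le_play_value:
  assumes "subprob_game G" "x \<in> verts G" "min_strategy G t"
  shows "strat_value G s x \<le> play_value G s t x"
proof -
  have "bdd_below ((\<lambda>t. play_value G s t x) ` {t. min_strategy G t})"
    using play_value_bounds[OF assms(1,2)] by (meson bdd_belowI2)
  then show ?thesis unfolding strat_value_def by (rule cINF_lower) (use assms(3) in simp)
qed

lemma strat_value_greatest:
  assumes "min_strategy G t0" "\<And>t. min_strategy G t \<Longrightarrow> c \<le> play_value G s t x"
  shows "c \<le> strat_value G s x"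
  unfolding strat_value_def by (rule cINF_greatest) (use assms in auto)

lemma strat_value_approx:
  assumes "min_strategy G t0" "0 < \<epsilon>"
  obtains t where "min_strategy G t" "play_value G s t x \<le> strat_value G s x + \<epsilon>"
proof -
  have "Inf ((\<lambda>t. play_value G s t x) ` {t. min_strategy G t}) < strat_value G s x + \<epsilon>"
    using assms(2) unfolding strat_value_def by simp
  from cInf_lessD[OF _ this] assms(1) that show ?thesis by (auto intro: less_imp_le)
qed

lemma strat_value_bounds:
  assumes "is_ssg G" "x \<in> verts G"
  shows "0 \<le> strat_value G s x \<and> strat_value G s x \<le> 1"
proof
  have G: "subprob_game G" using assms(1) by (rule subprob_game_if_ssg)
  show "0 \<le> strat_value G s x"
    by (rule strat_value_greatest[OF min_strategy_default_min[OF assms(1)]])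
       (use play_value_bounds[OF G assms(2)] in simp)
  show "strat_value G s x \<le> 1"
    using strat_value_le_play_value[OF G assms(2) min_strategy_default_min[OF assms(1)], of s]
      play_value_bounds[OF G assms(2)] by (meson order.trans)
qed

locale concat_setting =
  fixes G :: "('v, 'a) ssg_scheme" and A :: "('v \<times> 'v) set" and \<sigma> \<sigma>' :: "'v \<Rightarrow> 'v"
  assumes ssg: "is_ssg G" and A_arcs: "A \<subseteq> arcs G"
    and positional_\<sigma>: "positional_max G \<sigma>" and positional_\<sigma>': "positional_max G \<sigma>'"
begin

definition T :: "('v + 'v \<times> 'v) ssg" where
  "T = transformed G A (pos \<sigma>)"

definition \<sigma>cat :: "'v list \<Rightarrow> 'v" where
  "\<sigma>cat = concat_strategy (pos \<sigma>') A (pos \<sigma>)"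

definition \<sigma>T :: "('v + 'v \<times> 'v) list \<Rightarrow> 'v + 'v \<times> 'v" where
  "\<sigma>T = pos (lift_positional A \<sigma>')"

definition v\<sigma> :: "'v \<Rightarrow> real" where
  "v\<sigma> = strat_value G (pos \<sigma>)"

definition lift_succ :: "'v \<Rightarrow> 'v \<Rightarrow> 'v + 'v \<times> 'v" where
  "lift_succ x y = (if (x, y) \<in> A then Inr (x, y) else Inl y)"

definition base_vertex :: "'v + 'v \<times> 'v \<Rightarrow> 'v" where
  "base_vertex u = (case u of Inl y \<Rightarrow> y | Inr e \<Rightarrow> snd e)"

lemma finite_verts: "finite (verts G)"
  using ssg unfolding is_ssg_def by auto

lemma arcs_subset: "arcs G \<subseteq> verts G \<times> verts G"
  using ssg unfolding is_ssg_def by auto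

lemma subprob_game_G: "subprob_game G"
  using ssg by (rule subprob_game_if_ssg)

lemma T_simps:
  "verts T = Inl ` verts G \<union> Inr ` A"
  "vmax T = Inl ` vmax G" "vmin T = Inl ` vmin G" "vrand T = Inl ` vrand G"
  "sinks T = Inl ` sinks G \<union> Inr ` A"
  "arcs T = {(Inl x, Inl y) | x y. (x, y) \<in> arcs G - A}
              \<union> {(Inl x, Inr (x, y)) | x y. (x, y) \<in> A} \<union> {(Inr e, Inr e) | e. e \<in> A}"
  "val T (Inl s) = val G s" "val T (Inr (x, y)) = v\<sigma> y"
  "prob T (Inl x) (Inl y) = (if (x, y) \<in> A then 0 else prob G x y)"
  "prob T (Inl x) (Inr (x', y)) = (if x' = x \<and> (x, y) \<in> A then prob G x y else 0)"
  unfolding T_def transformed_def v\<sigma>_def by simp_all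

lemma finite_verts_T: "finite (verts T)"
proof -
  have "finite A" using finite_verts A_arcs arcs_subset by (meson finite_SigmaI finite_subset)
  then show ?thesis using finite_verts by (simp add: T_simps)
qed

lemma base_vertex_lift_succ [simp]: "base_vertex (lift_succ x y) = y"
  unfolding lift_succ_def base_vertex_def by auto

lemma inj_lift_succ: "inj (lift_succ x)"
  by (metis base_vertex_lift_succ injI)

lemma prob_T_lift_succ: "prob T (Inl x) (lift_succ x y) = prob G x y"
  unfolding lift_succ_def by (simp add: T_simps)

lemma lift_succ_in_verts_T: "y \<in> verts G \<Longrightarrow> lift_succ x y \<in> verts T"
  unfolding lift_succ_def T_simps by auto

lemma arc_T_lift_succ: "(x, y) \<in> arcs G \<Longrightarrow> (Inl x, lift_succ x y) \<in> arcs T"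
  unfolding lift_succ_def T_simps by auto

lemma arc_T_from_Inl:
  "(Inl x, u) \<in> arcs T \<Longrightarrow> (x, base_vertex u) \<in> arcs G \<and> u = lift_succ x (base_vertex u)"
  unfolding T_simps lift_succ_def base_vertex_def using A_arcs by auto

lemma arc_T_Inl_Inl: "(Inl x, Inl y) \<in> arcs T \<longleftrightarrow> (x, y) \<in> arcs G - A"
  unfolding T_simps by auto

lemma sum_prob_T_eq:
  assumes "x \<in> vrand G"
  shows "(\<Sum>u\<in>verts T. prob T (Inl x) u * F u) = (\<Sum>y\<in>verts G. prob G x y * F (lift_succ x y))"
proof -
  have "(\<Sum>y\<in>verts G. prob G x y * F (lift_succ x y))
      = (\<Sum>u\<in>lift_succ x ` verts G. prob T (Inl x) u * F u)"
    by (simp add: sum.reindex inj_on_subset[OF inj_lift_succ] prob_T_lift_succ)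
  also have "\<dots> = (\<Sum>u\<in>verts T. prob T (Inl x) u * F u)"
  proof (rule sum.mono_neutral_left[OF finite_verts_T])
    show "lift_succ x ` verts G \<subseteq> verts T" using lift_succ_in_verts_T by auto
    have "prob T (Inl x) u = 0" if u: "u \<in> verts T" "u \<notin> lift_succ x ` verts G" for u
    proof (rule ccontr)
      assume nz: "prob T (Inl x) u \<noteq> 0"
      show False
      proof (cases u)
        case (Inl y)
        then have "(x, y) \<notin> A" "y \<in> verts G" using nz u by (auto simp: T_simps split: if_splits)
        then show False using Inl u(2) by (auto simp: lift_succ_def)
      next
        case (Inr e)
        then obtain y where "e = (x, y)" "(x, y) \<in> A"
          using nz by (cases e) (auto simp: T_simps split: if_splits)
        moreover have "y \<in> verts G" using calculation(2) A_arcs arcs_subset by auto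
        ultimately show False using Inr u(2) by (auto simp: lift_succ_def)
      qed
    qed
    then show "\<forall>u\<in>verts T - lift_succ x ` verts G. prob T (Inl x) u * F u = 0" by simp
  qed
  finally show ?thesis by simp
qed

lemma strat_value_\<sigma>_bounds: "y \<in> verts G \<Longrightarrow> 0 \<le> v\<sigma> y \<and> v\<sigma> y \<le> 1"
  unfolding v\<sigma>_def using strat_value_bounds[OF ssg] by blast

lemma subprob_game_T: "subprob_game T"
proof -
  have "0 \<le> prob T u w \<and> sum (prob T u) (verts T) \<le> 1" if "u \<in> vrand T" for u w
  proof -
    obtain x where x: "u = Inl x" "x \<in> vrand G" using \<open>u \<in> vrand T\<close> by (auto simp: T_simps)
    have "0 \<le> prob G x y" for y using subprob_game_G x(2) unfolding subprob_game_def by auto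
    then have "0 \<le> prob T u w" using x by (cases w) (auto simp: T_simps)
    moreover have "sum (prob T u) (verts T) = (\<Sum>y\<in>verts G. prob G x y)"
      using sum_prob_T_eq[OF x(2), of "\<lambda>_. 1"] x by simp
    ultimately show ?thesis using subprob_game_G x(2) unfolding subprob_game_def by auto
  qed
  moreover have "0 \<le> val T u \<and> val T u \<le> 1" if "u \<in> sinks T" for u
    using that subprob_game_G strat_value_\<sigma>_bounds A_arcs arcs_subset
    by (auto simp: T_simps subprob_game_def)
  moreover have "sinks T \<inter> (vmax T \<union> vmin T \<union> vrand T) = {}"
    using subprob_game_G unfolding subprob_game_def T_simps by auto
  ultimately show ?thesis using finite_verts_T unfolding subprob_game_def by blast
qed

lemma \<sigma>cat_eq: "\<sigma>cat h = (if crosses A h then \<sigma> else \<sigma>') (last h)"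
  unfolding \<sigma>cat_def by (rule concat_strategy_pos)

lemma max_strategy_\<sigma>cat: "max_strategy G \<sigma>cat"
  using positional_\<sigma> positional_\<sigma>' unfolding max_strategy_def positional_max_def \<sigma>cat_eq by auto

lemma \<sigma>T_map_Inl: "h \<noteq> [] \<Longrightarrow> \<sigma>T (map Inl h) = lift_succ (last h) (\<sigma>' (last h))"
  unfolding \<sigma>T_def pos_def lift_positional_def lift_succ_def by (simp add: last_map)

lemma is_history_T_map_Inl:
  assumes "is_history G h" "\<not> crosses A h"
  shows "is_history T (map Inl h)"
  unfolding is_history_def
proof (intro conjI allI impI)
  show "map Inl h \<noteq> []" "set (map Inl h) \<subseteq> verts T"
    using assms(1) unfolding is_history_def by (auto simp: T_simps)
  fix i assume "Suc i < length (map Inl h)"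
  then show "(map Inl h ! i, map Inl h ! Suc i) \<in> arcs T"
    using assms unfolding is_history_def crosses_def by (simp add: arc_T_Inl_Inl)
qed

lemma is_history_T_last_Inl:
  assumes "is_history T hh" "last hh = Inl x"
  obtains h where "hh = map Inl h" "is_history G h" "\<not> crosses A h"
proof -
  have "\<exists>h. hh = map Inl h \<and> is_history G h \<and> \<not> crosses A h"
    using assms
  proof (induction hh arbitrary: x rule: rev_induct)
    case Nil
    then show ?case by (simp add: is_history_def)
  next
    case (snoc u hh)
    then have u: "u = Inl x" by simp
    show ?case
    proof (cases "hh = []")
      case True
      then have "is_history G [x]" using snoc.prems u by (auto simp: is_history_def T_simps)
      then show ?thesis using True u crosses_singleton by (intro exI[of _ "[x]"]) simp
    next
      case False
      then have hh: "is_history T hh" "(last hh, Inl x) \<in> arcs T"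
        using snoc.prems u is_history_snoc_iff[OF False, of T "Inl x"] by auto
      then obtain x' where x': "last hh = Inl x'" "(x', x) \<in> arcs G - A" by (auto simp: T_simps)
      obtain h where h: "hh = map Inl h" "is_history G h" "\<not> crosses A h"
        using snoc.IH[OF hh(1) x'(1)] by blast
      have "h \<noteq> []" "last h = x'" using False h x' by (auto simp: last_map)
      moreover have "x \<in> verts G" using x'(2) arcs_subset by auto
      ultimately show ?thesis
        using h x' u by (intro exI[of _ "h @ [x]"]) (simp add: is_history_snoc_iff crosses_snoc_iff)
    qed
  qed
  then show ?thesis using that by blast
qed

lemma sink_payoff_T_Inl [simp]: "sink_payoff T (Inl x) = sink_payoff G x"
  unfolding sink_payoff_def by (auto simp: T_simps)

lemma exp_payoff_T_crossing:
  assumes "(x, y) \<in> A"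
  shows "exp_payoff T s t (hh @ [lift_succ x y]) n = v\<sigma> y"
proof -
  have "Inr (x, y) \<in> sinks T" "Inr (x, y) \<in> verts T" using assms by (auto simp: T_simps)
  then show ?thesis
    using exp_payoff_sink[OF subprob_game_T, of "hh @ [lift_succ x y]"] assms
    by (simp add: lift_succ_def sink_payoff_def T_simps)
qed

lemma hist_value_T_crossing: "(x, y) \<in> A \<Longrightarrow> hist_value T s t (hh @ [lift_succ x y]) = v\<sigma> y"
  unfolding hist_value_def by (simp add: exp_payoff_T_crossing)

lemma exp_payoff_T_sink:
  assumes "h \<noteq> []" "last h \<in> sinks G"
  shows "exp_payoff T s t (map Inl h) n = sink_payoff G (last h)"
proof -
  have "last h \<in> verts G" using assms(2) ssg unfolding is_ssg_def by auto
  then show ?thesis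
    using exp_payoff_sink[OF subprob_game_T, of "map Inl h"] assms by (simp add: last_map T_simps)
qed

lemma trans_T_Inl:
  "last hh = Inl x \<Longrightarrow> trans T s t hh u =
    (if x \<in> vmax G then (if s hh = u then 1 else 0)
     else if x \<in> vmin G then (if t hh = u then 1 else 0)
     else if x \<in> vrand G then prob T (Inl x) u
     else if x \<in> sinks G then (if u = Inl x then 1 else 0) else 0)"
  unfolding trans_def Let_def T_simps by (simp add: image_iff)

definition coupled :: "('v list \<Rightarrow> 'v) \<Rightarrow> (('v + 'v \<times> 'v) list \<Rightarrow> 'v + 'v \<times> 'v) \<Rightarrow> bool" where
  "coupled t t\<^sub>T \<longleftrightarrow> (\<forall>h. is_history G h \<and> \<not> crosses A h \<and> last h \<in> vmin G
                         \<longrightarrow> t\<^sub>T (map Inl h) = lift_succ (last h) (t h))"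

lemma sum_trans_T_eq:
  assumes t: "min_strategy G t" and "coupled t t\<^sub>T"
    and h: "is_history G h" "\<not> crosses A h" "last h \<notin> sinks G"
  shows "(\<Sum>u\<in>verts T. trans T \<sigma>T t\<^sub>T (map Inl h) u * F u)
       = (\<Sum>y\<in>verts G. trans G \<sigma>cat t h y * F (lift_succ (last h) y))"
proof -
  define x where "x = last h"
  have h_ne: "h \<noteq> []" using h(1) unfolding is_history_def by auto
  have last_T: "last (map Inl h) = Inl x" using h_ne unfolding x_def by (simp add: last_map)
  have point_mass: "(\<Sum>u\<in>verts T. (if lift_succ x z = u then 1 else 0) * F u)
      = (\<Sum>y\<in>verts G. (if z = y then 1 else 0) * F (lift_succ x y))" if "z \<in> verts G" for z
    using that lift_succ_in_verts_T[OF that] finite_verts finite_verts_T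
    by (simp add: if_distrib[of "\<lambda>c. c * _"] sum.delta sum.delta' cong: if_cong)
  have "x \<in> vmax G \<union> vmin G \<union> vrand G"
    using ssg is_history_last_in_verts[OF h(1)] h(3) unfolding is_ssg_def x_def by blast
  moreover have "x \<notin> vmax G \<or> x \<notin> vmin G" "x \<notin> vrand G \<or> x \<notin> vmax G \<and> x \<notin> vmin G"
    using ssg unfolding is_ssg_def by auto
  ultimately consider "x \<in> vmax G" "x \<notin> vmin G" | "x \<in> vmin G" "x \<notin> vmax G"
    | "x \<in> vrand G" "x \<notin> vmax G" "x \<notin> vmin G" by blast
  then show ?thesis
  proof cases
    case 1
    have "trans T \<sigma>T t\<^sub>T (map Inl h) u = (if lift_succ x (\<sigma>' x) = u then 1 else 0)" for u
      using 1 h_ne by (simp add: trans_T_Inl[OF last_T] \<sigma>T_map_Inl x_def)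
    moreover have "trans G \<sigma>cat t h y = (if \<sigma>' x = y then 1 else 0)" for y
      using 1 h(2) by (simp add: trans_def \<sigma>cat_eq x_def)
    moreover have "\<sigma>' x \<in> verts G"
      using positional_\<sigma>' 1 arcs_subset unfolding positional_max_def by auto
    ultimately show ?thesis using point_mass x_def by simp
  next
    case 2
    have "t h \<in> verts G" "t\<^sub>T (map Inl h) = lift_succ x (t h)"
      using t h 2 \<open>coupled t t\<^sub>T\<close> arcs_subset unfolding min_strategy_def coupled_def x_def by auto
    moreover have "trans G \<sigma>cat t h y = (if t h = y then 1 else 0)" for y
      using 2 by (simp add: trans_def x_def)
    ultimately show ?thesis using point_mass 2 x_def by (simp add: trans_T_Inl[OF last_T])
  next
    case 3
    moreover have "trans G \<sigma>cat t h y = prob G x y" for y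
      using 3 by (simp add: trans_def x_def)
    ultimately show ?thesis using sum_prob_T_eq[OF 3(1)] x_def by (simp add: trans_T_Inl[OF last_T])
  qed
qed

lemma successor_cases:
  assumes "min_strategy G t" "is_history G h" "\<not> crosses A h" "trans G \<sigma>cat t h y \<noteq> 0"
  obtains "(last h, y) \<in> A"
    | "lift_succ (last h) y = Inl y" "is_history G (h @ [y])" "\<not> crosses A (h @ [y])"
proof -
  have h_ne: "h \<noteq> []" using assms(2) unfolding is_history_def by auto
  have "(last h, y) \<in> arcs G"
    using trans_nonzero_imp_arc[OF ssg max_strategy_\<sigma>cat assms(1,2,4)] .
  moreover have "y \<in> verts G" using calculation arcs_subset by auto
  ultimately show ?thesis
    using that assms(2,3) h_ne by (auto simp: lift_succ_def is_history_snoc_iff crosses_snoc_iff)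
qed

lemma exp_payoff_T_le_hist_value:
  assumes t: "min_strategy G t" and coupled: "coupled t t\<^sub>T"
    and crossing: "\<And>h y. is_history G h \<Longrightarrow> \<not> crosses A h \<Longrightarrow> (last h, y) \<in> A
                      \<Longrightarrow> v\<sigma> y \<le> hist_value G \<sigma>cat t (h @ [y])"
  shows "is_history G h \<Longrightarrow> \<not> crosses A h
           \<Longrightarrow> exp_payoff T \<sigma>T t\<^sub>T (map Inl h) n \<le> hist_value G \<sigma>cat t h"
proof (induction n arbitrary: h)
  case 0
  then have "h \<noteq> []" by (simp add: is_history_def)
  then show ?case
    using exp_payoff_le_hist_value[OF subprob_game_G, of \<sigma>cat t h 0] by (simp add: last_map)
next
  case (Suc n)
  have h_ne: "h \<noteq> []" using Suc.prems by (simp add: is_history_def)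
  show ?case
  proof (cases "last h \<in> sinks G")
    case True
    then have "exp_payoff T \<sigma>T t\<^sub>T (map Inl h) (Suc n) = exp_payoff G \<sigma>cat t h 0"
      by (simp only: exp_payoff.simps(1) exp_payoff_T_sink[OF h_ne True])
    then show ?thesis using exp_payoff_le_hist_value[OF subprob_game_G, of \<sigma>cat t h 0] by simp
  next
    case False
    have "trans G \<sigma>cat t h y * exp_payoff T \<sigma>T t\<^sub>T (map Inl h @ [lift_succ (last h) y]) n
        \<le> trans G \<sigma>cat t h y * hist_value G \<sigma>cat t (h @ [y])" for y
    proof (cases "trans G \<sigma>cat t h y = 0")
      case nonzero: False
      show ?thesis
      proof (rule successor_cases[OF t Suc.prems nonzero])
        assume crossed: "(last h, y) \<in> A"
        then show ?thesis using crossing[OF Suc.prems crossed] trans_nonneg[OF subprob_game_G]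
          by (simp add: exp_payoff_T_crossing mult_left_mono)
      next
        assume "lift_succ (last h) y = Inl y" "is_history G (h @ [y])" "\<not> crosses A (h @ [y])"
        then show ?thesis using Suc.IH[of "h @ [y]"] trans_nonneg[OF subprob_game_G]
          by (simp add: mult_left_mono)
      qed
    qed simp
    then have "exp_payoff T \<sigma>T t\<^sub>T (map Inl h) (Suc n)
        \<le> (\<Sum>y\<in>verts G. trans G \<sigma>cat t h y * hist_value G \<sigma>cat t (h @ [y]))"
      using sum_trans_T_eq[OF t coupled Suc.prems False] by (simp add: sum_mono)
    also have "\<dots> = hist_value G \<sigma>cat t h"
      using hist_value_step[OF subprob_game_G is_history_last_in_verts[OF Suc.prems(1)]] by simp
    finally show ?thesis .
  qed
qed

lemma exp_payoff_le_hist_value_T: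
  assumes t: "min_strategy G t" and coupled: "coupled t t\<^sub>T" and "0 \<le> \<epsilon>"
    and crossing: "\<And>h y. is_history G h \<Longrightarrow> \<not> crosses A h \<Longrightarrow> (last h, y) \<in> A
                      \<Longrightarrow> hist_value G \<sigma>cat t (h @ [y]) \<le> v\<sigma> y + \<epsilon>"
  shows "is_history G h \<Longrightarrow> \<not> crosses A h
           \<Longrightarrow> exp_payoff G \<sigma>cat t h n \<le> hist_value T \<sigma>T t\<^sub>T (map Inl h) + \<epsilon>"
proof (induction n arbitrary: h)
  case 0
  then have "h \<noteq> []" by (simp add: is_history_def)
  then show ?case
    using exp_payoff_le_hist_value[OF subprob_game_T, of \<sigma>T t\<^sub>T "map Inl h" 0] \<open>0 \<le> \<epsilon>\<close>
    by (simp add: last_map)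
next
  case (Suc n)
  have h_ne: "h \<noteq> []" using Suc.prems by (simp add: is_history_def)
  show ?case
  proof (cases "last h \<in> sinks G")
    case True
    then have "exp_payoff G \<sigma>cat t h (Suc n) = exp_payoff T \<sigma>T t\<^sub>T (map Inl h) 0"
      using h_ne exp_payoff_sink[OF subprob_game_G True is_history_last_in_verts[OF Suc.prems(1)]]
      by (simp only: exp_payoff.simps(1) last_map[OF h_ne] sink_payoff_T_Inl)
    then show ?thesis
      using exp_payoff_le_hist_value[OF subprob_game_T, of \<sigma>T t\<^sub>T "map Inl h" 0] \<open>0 \<le> \<epsilon>\<close> by simp
  next
    case False
    let ?v\<^sub>T = "\<lambda>y. hist_value T \<sigma>T t\<^sub>T (map Inl h @ [lift_succ (last h) y])"
    have step: "trans G \<sigma>cat t h y * exp_payoff G \<sigma>cat t (h @ [y]) n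
        \<le> trans G \<sigma>cat t h y * (?v\<^sub>T y + \<epsilon>)" for y
    proof (cases "trans G \<sigma>cat t h y = 0")
      case nonzero: False
      show ?thesis
      proof (rule successor_cases[OF t Suc.prems nonzero])
        assume crossed: "(last h, y) \<in> A"
        then show ?thesis
          using crossing[OF Suc.prems crossed] trans_nonneg[OF subprob_game_G]
            exp_payoff_le_hist_value[OF subprob_game_G, of \<sigma>cat t "h @ [y]" n]
          by (simp add: hist_value_T_crossing mult_left_mono)
      next
        assume "lift_succ (last h) y = Inl y" "is_history G (h @ [y])" "\<not> crosses A (h @ [y])"
        then show ?thesis using Suc.IH[of "h @ [y]"] trans_nonneg[OF subprob_game_G]
          by (simp add: mult_left_mono)
      qed
    qed simp
    have "last (map Inl h) \<in> verts T"
      using h_ne is_history_last_in_verts[OF Suc.prems(1)] by (simp add: last_map T_simps)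
    then have step_T: "hist_value T \<sigma>T t\<^sub>T (map Inl h) = (\<Sum>y\<in>verts G. trans G \<sigma>cat t h y * ?v\<^sub>T y)"
      using hist_value_step[OF subprob_game_T]
        sum_trans_T_eq[OF t coupled Suc.prems False, of "\<lambda>u. hist_value T \<sigma>T t\<^sub>T (map Inl h @ [u])"]
      by simp
    have "exp_payoff G \<sigma>cat t h (Suc n) \<le> (\<Sum>y\<in>verts G. trans G \<sigma>cat t h y * (?v\<^sub>T y + \<epsilon>))"
      by (simp add: sum_mono step)
    also have "\<dots> = hist_value T \<sigma>T t\<^sub>T (map Inl h) + \<epsilon> * (\<Sum>y\<in>verts G. trans G \<sigma>cat t h y)"
      by (simp add: step_T distrib_left sum.distrib sum_distrib_left mult.commute)
    also have "\<dots> \<le> hist_value T \<sigma>T t\<^sub>T (map Inl h) + \<epsilon>"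
      using sum_trans_le_1[OF subprob_game_G, of \<sigma>cat t h] \<open>0 \<le> \<epsilon>\<close> by (simp add: mult_left_le)
    finally show ?thesis .
  qed
qed

definition min_to_T :: "('v list \<Rightarrow> 'v) \<Rightarrow> ('v + 'v \<times> 'v) list \<Rightarrow> 'v + 'v \<times> 'v" where
  "min_to_T t hh = lift_succ (last (map projl hh)) (t (map projl hh))"

lemma min_strategy_min_to_T:
  assumes t: "min_strategy G t"
  shows "min_strategy T (min_to_T t)"
  unfolding min_strategy_def
proof (intro allI impI)
  fix hh assume hh: "is_history T hh \<and> last hh \<in> vmin T"
  then obtain x where x: "last hh = Inl x" "x \<in> vmin G" by (auto simp: T_simps)
  obtain h where h: "hh = map Inl h" "is_history G h" "\<not> crosses A h"
    using is_history_T_last_Inl hh x(1) by blast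
  have "h \<noteq> []" using h(2) by (simp add: is_history_def)
  then have "last h = x" using x(1) h(1) by (simp add: last_map)
  then show "(last hh, min_to_T t hh) \<in> arcs T"
    using t h x arc_T_lift_succ unfolding min_strategy_def min_to_T_def by (auto simp: comp_def)
qed

lemma coupled_min_to_T: "coupled t (min_to_T t)"
  unfolding coupled_def min_to_T_def by (simp add: comp_def)

lemma v\<sigma>_le_hist_value_crossing:
  assumes t: "min_strategy G t" and h: "is_history G h" "\<not> crosses A h" and y: "(last h, y) \<in> A"
  shows "v\<sigma> y \<le> hist_value G \<sigma>cat t (h @ [y])"
proof -
  have h_ne: "h \<noteq> []" using h(1) by (simp add: is_history_def)
  have y_arc: "(last h, y) \<in> arcs G" "y \<in> verts G" using y A_arcs arcs_subset by auto
  have "hist_value G \<sigma>cat t (h @ [y]) = hist_value G (pos \<sigma>) (continue_min G t h y) [y]"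
    by (rule hist_value_shift)
       (use concat_strategy_first_crossing[OF h(2) h_ne y] in \<open>auto simp: \<sigma>cat_def continue_min_def\<close>)
  also have "\<dots> = play_value G (pos \<sigma>) (continue_min G t h y) y"
    using play_value_eq_hist_value[OF finite_verts y_arc(2)] by simp
  finally show ?thesis
    using strat_value_le_play_value[OF subprob_game_G y_arc(2)
        min_strategy_continue_min[OF ssg t h(1) y_arc(1)]]
    unfolding v\<sigma>_def by simp
qed

lemma strat_value_T_le_concat:
  assumes x: "x \<in> verts G"
  shows "strat_value T \<sigma>T (Inl x) \<le> strat_value G \<sigma>cat x"
proof (rule strat_value_greatest[OF min_strategy_default_min[OF ssg]])
  fix t assume t: "min_strategy G t"
  have x_T: "Inl x \<in> verts T" using x by (simp add: T_simps)
  have "strat_value T \<sigma>T (Inl x) \<le> play_value T \<sigma>T (min_to_T t) (Inl x)"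
    by (rule strat_value_le_play_value[OF subprob_game_T x_T min_strategy_min_to_T[OF t]])
  also have "\<dots> = hist_value T \<sigma>T (min_to_T t) (map Inl [x])"
    using play_value_eq_hist_value[OF finite_verts_T x_T] by simp
  also have "\<dots> \<le> hist_value G \<sigma>cat t [x]"
    by (rule hist_value_le,
        rule exp_payoff_T_le_hist_value[OF t coupled_min_to_T v\<sigma>_le_hist_value_crossing[OF t]])
       (use x in \<open>simp_all add: is_history_def crosses_singleton\<close>)
  also have "\<dots> = play_value G \<sigma>cat t x"
    using play_value_eq_hist_value[OF finite_verts x] by simp
  finally show "strat_value T \<sigma>T (Inl x) \<le> play_value G \<sigma>cat t x" .
qed

definition min_to_G :: "(('v + 'v \<times> 'v) list \<Rightarrow> 'v + 'v \<times> 'v) \<Rightarrow> ('v \<Rightarrow> 'v list \<Rightarrow> 'v)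
                        \<Rightarrow> 'v list \<Rightarrow> 'v" where
  "min_to_G t\<^sub>T \<tau> = concat_strategy (\<lambda>h. base_vertex (t\<^sub>T (map Inl h))) A (\<lambda>r. \<tau> (hd r) r)"

lemma arc_T_min_move:
  assumes "min_strategy T t\<^sub>T" "is_history G h" "\<not> crosses A h" "last h \<in> vmin G"
  shows "(Inl (last h), t\<^sub>T (map Inl h)) \<in> arcs T"
proof -
  have "h \<noteq> []" using assms(2) by (simp add: is_history_def)
  then have "last (map Inl h) = Inl (last h)" by (simp add: last_map)
  then show ?thesis
    using assms is_history_T_map_Inl[OF assms(2,3)] unfolding min_strategy_def
    by (metis T_simps(3) imageI)
qed

lemma min_strategy_min_to_G:
  assumes t\<^sub>T: "min_strategy T t\<^sub>T" and \<tau>: "\<And>y. y \<in> verts G \<Longrightarrow> min_strategy G (\<tau> y)"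
  shows "min_strategy G (min_to_G t\<^sub>T \<tau>)"
  unfolding min_strategy_def
proof (intro allI impI)
  fix h assume h: "is_history G h \<and> last h \<in> vmin G"
  show "(last h, min_to_G t\<^sub>T \<tau> h) \<in> arcs G"
  proof (cases "crosses A h")
    case True
    then obtain k where k: "0 < k" "k < length h" "min_to_G t\<^sub>T \<tau> h = \<tau> (hd (drop k h)) (drop k h)"
      unfolding min_to_G_def by (rule concat_strategy_crosses)
    have "is_history G (drop k h)" using is_history_drop h k by blast
    moreover have "hd (drop k h) \<in> verts G" "last (drop k h) = last h"
      using h k by (auto simp: is_history_def hd_drop_conv_nth)
    ultimately show ?thesis using \<tau> h k(3) unfolding min_strategy_def by metis
  next
    case False
    then show ?thesis
      using arc_T_from_Inl[OF arc_T_min_move[OF t\<^sub>T _ False]] h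
      by (simp add: min_to_G_def concat_strategy_not_crosses)
  qed
qed

lemma coupled_min_to_G:
  assumes "min_strategy T t\<^sub>T"
  shows "coupled (min_to_G t\<^sub>T \<tau>) t\<^sub>T"
  unfolding coupled_def
  using arc_T_from_Inl[OF arc_T_min_move[OF assms]]
  by (auto simp: min_to_G_def concat_strategy_not_crosses)

lemma hist_value_min_to_G_crossing:
  assumes "\<not> crosses A h" "h \<noteq> []" "(last h, y) \<in> A" "y \<in> verts G"
  shows "hist_value G \<sigma>cat (min_to_G t\<^sub>T \<tau>) (h @ [y]) = play_value G (pos \<sigma>) (\<tau> y) y"
proof -
  have "hist_value G \<sigma>cat (min_to_G t\<^sub>T \<tau>) (h @ [y]) = hist_value G (pos \<sigma>) (\<tau> y) [y]"
    by (rule hist_value_shift)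
       (use concat_strategy_first_crossing[OF assms(1-3)] in \<open>auto simp: \<sigma>cat_def min_to_G_def\<close>)
  then show ?thesis using play_value_eq_hist_value[OF finite_verts assms(4)] by simp
qed

lemma strat_value_concat_le_T:
  assumes x: "x \<in> verts G"
  shows "strat_value G \<sigma>cat x \<le> strat_value T \<sigma>T (Inl x)"
proof (rule strat_value_greatest[OF min_strategy_min_to_T[OF min_strategy_default_min[OF ssg]]])
  fix t\<^sub>T assume t\<^sub>T: "min_strategy T t\<^sub>T"
  have x_T: "Inl x \<in> verts T" using x by (simp add: T_simps)
  show "strat_value G \<sigma>cat x \<le> play_value T \<sigma>T t\<^sub>T (Inl x)"
  proof (rule field_le_epsilon)
    fix \<epsilon> :: real assume "0 < \<epsilon>"
    have "\<exists>\<tau>. y \<in> verts G \<longrightarrow> min_strategy G \<tau> \<and> play_value G (pos \<sigma>) \<tau> y \<le> v\<sigma> y + \<epsilon>" for y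
      using strat_value_approx[OF min_strategy_default_min[OF ssg] \<open>0 < \<epsilon>\<close>] unfolding v\<sigma>_def by metis
    then obtain \<tau> where \<tau>: "\<And>y. y \<in> verts G
                                \<Longrightarrow> min_strategy G (\<tau> y) \<and> play_value G (pos \<sigma>) (\<tau> y) y \<le> v\<sigma> y + \<epsilon>"
      by metis
    let ?t = "min_to_G t\<^sub>T \<tau>"
    have t: "min_strategy G ?t" using min_strategy_min_to_G[OF t\<^sub>T] \<tau> by blast
    have crossing: "hist_value G \<sigma>cat ?t (h @ [y]) \<le> v\<sigma> y + \<epsilon>"
      if "is_history G h" "\<not> crosses A h" "(last h, y) \<in> A" for h y
    proof -
      have "h \<noteq> []" "y \<in> verts G" using that A_arcs arcs_subset by (auto simp: is_history_def)
      then show ?thesis using hist_value_min_to_G_crossing[OF that(2) _ that(3)] \<tau> by simp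
    qed
    have "strat_value G \<sigma>cat x \<le> play_value G \<sigma>cat ?t x"
      by (rule strat_value_le_play_value[OF subprob_game_G x t])
    also have "\<dots> = hist_value G \<sigma>cat ?t [x]"
      using play_value_eq_hist_value[OF finite_verts x] by simp
    also have "\<dots> \<le> hist_value T \<sigma>T t\<^sub>T (map Inl [x]) + \<epsilon>"
      by (rule hist_value_le,
          rule exp_payoff_le_hist_value_T[OF t coupled_min_to_G[OF t\<^sub>T] _ crossing])
         (use x \<open>0 < \<epsilon>\<close> in \<open>simp_all add: is_history_def crosses_singleton\<close>)
    also have "\<dots> = play_value T \<sigma>T t\<^sub>T (Inl x) + \<epsilon>"
      using play_value_eq_hist_value[OF finite_verts_T x_T] by simp
    finally show "strat_value G \<sigma>cat x \<le> play_value T \<sigma>T t\<^sub>T (Inl x) + \<epsilon>" .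
  qed
qed

lemma strat_value_concat_eq_transformed:
  "x \<in> verts G \<Longrightarrow> strat_value G \<sigma>cat x = strat_value T \<sigma>T (Inl x)"
  using strat_value_T_le_concat strat_value_concat_le_T by (meson antisym)

end

theorem lemma16:
  fixes G :: "('v, 'a) ssg_scheme"
    and A :: "('v \<times> 'v) set"
    and \<sigma> \<sigma>' :: "'v \<Rightarrow> 'v"
  assumes "is_ssg G"
    and "A \<subseteq> arcs G"
    and "positional_max G \<sigma>"
    and "positional_max G \<sigma>'"
  shows "\<forall>x \<in> verts G.
           strat_value G (concat_strategy (pos \<sigma>') A (pos \<sigma>)) x
         = strat_value (transformed G A (pos \<sigma>)) (pos (lift_positional A \<sigma>')) (Inl x)"
proof -
  interpret concat_setting G A \<sigma> \<sigma>' using assms by unfold_locales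
  show ?thesis
    using strat_value_concat_eq_transformed unfolding \<sigma>cat_def T_def \<sigma>T_def by blast
qed

end
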